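(* Let $m,n\ge 1$ and let $\lambda\subseteq\nu$ be partitions contained in the rectangle $(n-1)^{m-1}$. Then $\mathrm{PASM}(\nu/\lambda,m,n)$ is exactly the set of real $m\times n$ matrices $X=(X_{ij})$ satisfying all of the following: (1) $0\le \sum_{i'=1}^{i} X_{i'j}\le 1$ for all $1\le i\le m$, $1\le j\le n$; (2) $0\le \sum_{j'=1}^{j} X_{ij'}\le 1$ for all $1\le i\le m$, $1\le j\le n$; (3) $\sum_{i=1}^{m} X_{i1}=1$ and $\sum_{j=1}^{n} X_{1j}=1$; (4) $\sum_{j=1}^{n} X_{ij}=0$ for $2\le i\le m$, and $\sum_{i=1}^{m} X_{ij}=0$ for $2\le j\le n$; (5) $X_{ij}=0$ whenever $j\le\lambda_i$; (6) $X_{ij}=0$ whenever $i>1$ and $\nu_{i-1}+1<j\le n$, and $X_{1j}=0$ whenever $\nu_1+1<j\le n$.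
   Context: A partition $\mu=(\mu_1\ge\mu_2\ge\cdots)$ is a weakly decreasing sequence of nonnegative integers with finitely many nonzero terms; $\ell(\mu)$ denotes its number of positive parts. We identify $\mu$ with the set of matrix positions $\{(i,j): i\ge1,\ 1\le j\le\mu_i\}$. We write $\mu\subseteq\nu$ if $\mu_i\le\nu_i$ for all $i$, and $\mu\subseteq a^b$ (the $b\times a$ rectangle) if $\ell(\mu)\le b$ and $\mu_1\le a$. For a partition $\mu\subseteq(n-1)^{m-1}$, the $m\times n$ matrix $M^\mu=M^\mu(m,n)$ has entries: $M^\mu_{1,\mu_1+1}=1$; for each $1\le k\le m-1$ with $\mu_k>\mu_{k+1}$, $M^\mu_{k+1,\mu_{k+1}+1}=1$ and $M^\mu_{k+1,\mu_k+1}=-1$; all other entries are $0$. For partitions $\lambda\subseteq\nu\subseteq(n-1)^{m-1}$, $\mathrm{PASM}(\nu/\lambda,m,n)$ is the convex hull in $\mathbb{R}^{mn}$ of the matrices $M^\mu(m,n)$ over all partitions $\mu$ with $\lambda\subseteq\mu\subseteq\nu$. *)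

theory Defs
  imports "HOL-Analysis.Analysis" "HOL-Library.Function_Algebras"
begin

(* Real-valued functions form a real vector space pointwise; this lets us
   view m x n real matrices as functions nat => nat => real and use the
   library's convex hull. *)
instantiation "fun" :: (type, real_vector) real_vector
begin
definition scaleR_fun :: "real \<Rightarrow> ('a \<Rightarrow> 'b) \<Rightarrow> 'a \<Rightarrow> 'b" where
  "scaleR_fun r f = (\<lambda>x. r *\<^sub>R f x)"
instance
  by standard (auto simp: scaleR_fun_def fun_eq_iff scaleR_add_right scaleR_add_left)
end

(* A partition is a function mu :: nat => nat, mu i being the i-th part
   (indices start at 1; the value at index 0 is ignored). *)
definition is_partition :: "(nat \<Rightarrow> nat) \<Rightarrow> bool" where
  "is_partition \<mu> \<longleftrightarrow> (\<forall>i\<ge>1. \<mu> (Suc i) \<le> \<mu> i) \<and> finite {i. 1 \<le> i \<and> 0 < \<mu> i}"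

definition part_le :: "(nat \<Rightarrow> nat) \<Rightarrow> (nat \<Rightarrow> nat) \<Rightarrow> bool" where
  "part_le \<mu> \<nu> \<longleftrightarrow> (\<forall>i\<ge>1. \<mu> i \<le> \<nu> i)"

definition in_rect :: "(nat \<Rightarrow> nat) \<Rightarrow> nat \<Rightarrow> nat \<Rightarrow> bool" where
  "in_rect \<mu> a b \<longleftrightarrow> (\<forall>i>b. \<mu> i = 0) \<and> \<mu> 1 \<le> a"

(* real matrices indexed by 1-based (i,j); an m x n matrix is one vanishing
   outside {1..m} x {1..n} *)
type_synonym rmat = "nat \<Rightarrow> nat \<Rightarrow> real"

definition is_mat :: "nat \<Rightarrow> nat \<Rightarrow> rmat \<Rightarrow> bool" where
  "is_mat m n X \<longleftrightarrow> (\<forall>i j. \<not> (1 \<le> i \<and> i \<le> m \<and> 1 \<le> j \<and> j \<le> n) \<longrightarrow> X i j = 0)"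

definition Mmat :: "(nat \<Rightarrow> nat) \<Rightarrow> nat \<Rightarrow> nat \<Rightarrow> rmat" where
  "Mmat \<mu> m n = (\<lambda>i j.
     if 1 \<le> i \<and> i \<le> m \<and> 1 \<le> j \<and> j \<le> n then
       (if i = 1 then (if j = \<mu> 1 + 1 then 1 else 0)
        else if \<mu> (i - 1) > \<mu> i then
          (if j = \<mu> i + 1 then 1 else if j = \<mu> (i - 1) + 1 then -1 else 0)
        else 0)
     else 0)"

definition PASM :: "(nat \<Rightarrow> nat) \<Rightarrow> (nat \<Rightarrow> nat) \<Rightarrow> nat \<Rightarrow> nat \<Rightarrow> rmat set" where
  "PASM \<nu> lam m n = convex hull
     {Mmat \<mu> m n | \<mu>. is_partition \<mu> \<and> part_le lam \<mu> \<and> part_le \<mu> \<nu>}"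

end

theory Submission
  imports Defs
begin

text \<open>Write \<open>F(i,j)\<close> for the sum of the entries of \<open>X\<close> in rows \<open>1..i\<close> and columns \<open>1..j\<close>.
  The conditions imply that \<open>F\<close> increases in both indices by steps of at most \<open>1\<close>, that
  \<open>F(i,n) = 1\<close>, and that \<open>F\<close> vanishes for \<open>j \<le> \<lambda>\<^sub>i\<close> and equals \<open>1\<close> for \<open>j > \<nu>\<^sub>i\<close>; the vertex
  \<open>M\<^sup>\<mu>\<close> has \<open>F(i,j) = [\<mu>\<^sub>i < j]\<close>. The conditions are linear, so they cut out a convex set
  containing the vertices. Conversely, let \<open>t\<close> be the least value of \<open>F\<close> in \<open>(0,1)\<close> and \<open>\<mu>\<^sub>i\<close>
  the number of zeros in row \<open>i\<close> of \<open>F\<close>: then \<open>X = t M\<^sup>\<mu> + (1 - t) Y\<close> where \<open>Y\<close> satisfies the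
  conditions again and its \<open>F\<close> takes fewer distinct values in \<open>(0,1)\<close>, so induction writes \<open>X\<close>
  as a convex combination of vertices.\<close>

lemma scaleR_rmat_apply [simp]: "((a::real) *\<^sub>R (X::rmat)) i j = a * X i j"
  by (simp add: scaleR_fun_def)

lemma partition_antimono:
  assumes "is_partition \<mu>" "1 \<le> i" "i \<le> k"
  shows "\<mu> k \<le> \<mu> i"
  using assms(3)
proof (induction k rule: dec_induct)
  case base
  then show ?case by simp
next
  case (step k)
  moreover have "\<mu> (Suc k) \<le> \<mu> k"
    using assms(1,2) step.hyps unfolding is_partition_def by simp
  ultimately show ?case by simp
qed

lemma in_rect_mono:
  assumes "part_le \<mu> \<nu>" "in_rect \<nu> a b"
  shows "in_rect \<mu> a b"
  unfolding in_rect_def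
proof
  show "\<forall>i>b. \<mu> i = 0"
  proof (intro allI impI)
    fix i assume "b < i"
    then have "\<mu> i \<le> \<nu> i"
      using assms(1) unfolding part_le_def by simp
    moreover have "\<nu> i = 0"
      using assms(2) \<open>b < i\<close> unfolding in_rect_def by simp
    ultimately show "\<mu> i = 0"
      by simp
  qed
  show "\<mu> 1 \<le> a"
    using assms unfolding part_le_def in_rect_def by (meson le_trans order_refl)
qed

lemma downward_closed_eq_atLeastAtMost:
  fixes S :: "nat set"
  assumes "S \<subseteq> {1..n}" and "\<And>j j'. j' \<in> S \<Longrightarrow> 1 \<le> j \<Longrightarrow> j \<le> j' \<Longrightarrow> j \<in> S"
  shows "S = {1..card S}"
proof (cases "S = {}")
  case False
  have "finite S"
    using assms(1) finite_subset by blast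
  then have "Max S \<in> S" "\<forall>j\<in>S. j \<le> Max S"
    using False by simp_all
  have "S = {1..Max S}"
  proof
    show "S \<subseteq> {1..Max S}"
      using assms(1) \<open>\<forall>j\<in>S. j \<le> Max S\<close> by auto
    show "{1..Max S} \<subseteq> S"
      using assms(2)[OF \<open>Max S \<in> S\<close>] by auto
  qed
  moreover have "card {1..Max S} = Max S"
    by simp
  ultimately show ?thesis
    by metis
qed simp

definition corner_sum :: "rmat \<Rightarrow> nat \<Rightarrow> nat \<Rightarrow> real" where
  "corner_sum X i j = (\<Sum>i'=1..i. \<Sum>j'=1..j. X i' j')"

lemma corner_sum_0_left [simp]: "corner_sum X 0 j = 0"
  and corner_sum_0_right [simp]: "corner_sum X i 0 = 0"
  by (simp_all add: corner_sum_def)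

lemma corner_sum_Suc_row: "corner_sum X (Suc i) j = corner_sum X i j + (\<Sum>j'=1..j. X (Suc i) j')"
  by (simp add: corner_sum_def)

lemma corner_sum_Suc_col: "corner_sum X i (Suc j) = corner_sum X i j + (\<Sum>i'=1..i. X i' (Suc j))"
  by (simp add: corner_sum_def sum.distrib)

lemma row_partial_sum_eq:
  "1 \<le> i \<Longrightarrow> (\<Sum>j'=1..j. X i j') = corner_sum X i j - corner_sum X (i - 1) j"
  by (cases i) (simp_all add: corner_sum_Suc_row)

lemma column_partial_sum_eq:
  "1 \<le> j \<Longrightarrow> (\<Sum>i'=1..i. X i' j) = corner_sum X i j - corner_sum X i (j - 1)"
  by (cases j) (simp_all add: corner_sum_Suc_col)

lemma entry_eq_corner_sum:
  assumes "1 \<le> i" "1 \<le> j"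
  shows "X i j = corner_sum X i j - corner_sum X (i - 1) j - corner_sum X i (j - 1)
                 + corner_sum X (i - 1) (j - 1)"
proof -
  have "(\<Sum>j'=1..j. X i j') = (\<Sum>j'=1..j - 1. X i j') + X i j"
    using assms(2) by (cases j) auto
  then show ?thesis
    using row_partial_sum_eq[OF assms(1), of X j] row_partial_sum_eq[OF assms(1), of X "j - 1"]
    by simp
qed

lemma mat_eqI_corner_sum:
  assumes "is_mat m n X" "is_mat m n Z"
    and "\<And>i j. i \<le> m \<Longrightarrow> j \<le> n \<Longrightarrow> corner_sum X i j = corner_sum Z i j"
  shows "X = Z"
proof (intro ext)
  fix i j
  show "X i j = Z i j"
  proof (cases "1 \<le> i \<and> i \<le> m \<and> 1 \<le> j \<and> j \<le> n")
    case True
    then have "corner_sum X i' j' = corner_sum Z i' j'" if "i' \<le> i" "j' \<le> j" for i' j'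
      using assms(3) that by simp
    then show ?thesis
      using entry_eq_corner_sum[of i j X] entry_eq_corner_sum[of i j Z] True by simp
  next
    case False
    then show ?thesis
      using assms(1,2) unfolding is_mat_def by auto
  qed
qed

lemma corner_sum_lincomb:
  "corner_sum (a *\<^sub>R X + b *\<^sub>R Z) i j = a * corner_sum X i j + b * corner_sum Z i j"
  by (simp add: corner_sum_def sum.distrib sum_distrib_left)

definition pasm_equations :: "nat \<Rightarrow> nat \<Rightarrow> (nat \<Rightarrow> nat) \<Rightarrow> (nat \<Rightarrow> nat) \<Rightarrow> rmat set" where
  "pasm_equations m n lam \<nu> = {X. is_mat m n X
      \<and> (\<Sum>i=1..m. X i 1) = 1 \<and> (\<Sum>j=1..n. X 1 j) = 1
      \<and> (\<forall>i\<in>{2..m}. (\<Sum>j=1..n. X i j) = 0)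
      \<and> (\<forall>j\<in>{2..n}. (\<Sum>i=1..m. X i j) = 0)
      \<and> (\<forall>i\<in>{1..m}. \<forall>j\<in>{1..n}. j \<le> lam i \<longrightarrow> X i j = 0)
      \<and> (\<forall>i\<in>{2..m}. \<forall>j. \<nu> (i - 1) + 1 < j \<and> j \<le> n \<longrightarrow> X i j = 0)
      \<and> (\<forall>j. \<nu> 1 + 1 < j \<and> j \<le> n \<longrightarrow> X 1 j = 0)}"

definition partial_sums_bounded :: "nat \<Rightarrow> nat \<Rightarrow> rmat set" where
  "partial_sums_bounded m n = {X.
      (\<forall>i\<in>{1..m}. \<forall>j\<in>{1..n}. 0 \<le> (\<Sum>i'=1..i. X i' j) \<and> (\<Sum>i'=1..i. X i' j) \<le> 1)
      \<and> (\<forall>i\<in>{1..m}. \<forall>j\<in>{1..n}. 0 \<le> (\<Sum>j'=1..j. X i j') \<and> (\<Sum>j'=1..j. X i j') \<le> 1)}"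

lemma affine_pasm_equations: "affine (pasm_equations m n lam \<nu>)"
  unfolding affine_def pasm_equations_def is_mat_def
  by (auto simp: sum.distrib sum_distrib_left[symmetric])

lemma convex_partial_sums_bounded: "convex (partial_sums_bounded m n)"
  unfolding convex_def partial_sums_bounded_def
  by (auto simp: sum.distrib sum_distrib_left[symmetric] intro!: convex_bound_le)

lemma partial_sums_bounded_iff_corner_sum:
  "X \<in> partial_sums_bounded m n \<longleftrightarrow> (\<forall>i\<in>{1..m}. \<forall>j\<in>{1..n}.
      corner_sum X i (j - 1) \<le> corner_sum X i j \<and> corner_sum X i j \<le> corner_sum X i (j - 1) + 1 \<and>
      corner_sum X (i - 1) j \<le> corner_sum X i j \<and> corner_sum X i j \<le> corner_sum X (i - 1) j + 1)"
proof -
  have "(\<Sum>i'=1..i. X i' j) = corner_sum X i j - corner_sum X i (j - 1)"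
    and "(\<Sum>j'=1..j. X i j') = corner_sum X i j - corner_sum X (i - 1) j"
    if "i \<in> {1..m}" "j \<in> {1..n}" for i j
    using that row_partial_sum_eq[of i X j] column_partial_sum_eq[of j X i] by auto
  then show ?thesis
    unfolding partial_sums_bounded_def by force
qed

lemma pasm_equations_mono:
  assumes "part_le lam' lam" "part_le \<nu> \<nu>'"
  shows "pasm_equations m n lam \<nu> \<subseteq> pasm_equations m n lam' \<nu>'"
proof -
  have "j \<le> lam i" if "1 \<le> i" "j \<le> lam' i" for i j
    using assms(1) that unfolding part_le_def by (meson le_trans)
  moreover have "\<nu> i + 1 < j" if "1 \<le> i" "\<nu>' i + 1 < j" for i j
    using assms(2) that unfolding part_le_def by (meson add_le_mono1 le_less_trans)
  ultimately show ?thesis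
    unfolding pasm_equations_def by auto
qed

text \<open>Row \<open>i + 1\<close> of \<open>M\<^sup>\<mu>\<close> moves the single \<open>1\<close> of the partial column sums
  from column \<open>\<mu>\<^sub>i + 1\<close> to column \<open>\<mu>\<^sub>i\<^sub>+\<^sub>1 + 1\<close>.\<close>
lemma column_partial_sum_Mmat:
  assumes "is_partition \<mu>" "i \<le> m" "1 \<le> j" "j \<le> n"
  shows "(\<Sum>i'=1..i. Mmat \<mu> m n i' j) = (if 1 \<le> i \<and> j = \<mu> i + 1 then 1 else 0)"
  using assms(2)
proof (induction i)
  case 0
  then show ?case by simp
next
  case (Suc i)
  show ?case
  proof (cases "i = 0")
    case True
    then show ?thesis using assms(3,4) Suc.prems by (simp add: Mmat_def)
  next
    case False
    have "\<mu> (Suc i) \<le> \<mu> i"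
      using assms(1) False unfolding is_partition_def by simp
    moreover have "Mmat \<mu> m n (Suc i) j = (if \<mu> (Suc i) < \<mu> i then
        (if j = \<mu> (Suc i) + 1 then 1 else if j = \<mu> i + 1 then -1 else 0) else 0)"
      using Suc.prems assms(3,4) False by (simp add: Mmat_def)
    ultimately show ?thesis
      using Suc False by auto
  qed
qed

lemma corner_sum_Mmat:
  assumes "is_partition \<mu>" "i \<le> m" "j \<le> n"
  shows "corner_sum (Mmat \<mu> m n) i j = (if 1 \<le> i \<and> \<mu> i < j then 1 else 0)"
proof -
  have "corner_sum (Mmat \<mu> m n) i j = (\<Sum>j'=1..j. \<Sum>i'=1..i. Mmat \<mu> m n i' j')"
    unfolding corner_sum_def by (rule sum.swap)
  also have "\<dots> = (\<Sum>j'\<in>{1..j}. if 1 \<le> i \<and> j' = \<mu> i + 1 then 1 else 0)"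
    using assms column_partial_sum_Mmat[OF assms(1,2)] by (intro sum.cong) auto
  also have "\<dots> = (if 1 \<le> i \<and> \<mu> i < j then 1 else 0)"
    by (cases "1 \<le> i") (simp_all add: sum.delta)
  finally show ?thesis .
qed

lemma Mmat_mem_own_constraints:
  assumes \<mu>: "is_partition \<mu>" and rect: "in_rect \<mu> (n - 1) (m - 1)" and "1 \<le> m" "1 \<le> n"
  shows "Mmat \<mu> m n \<in> pasm_equations m n \<mu> \<mu> \<inter> partial_sums_bounded m n"
proof -
  let ?M = "Mmat \<mu> m n"
  have \<mu>_lt_n: "\<mu> i < n" if "1 \<le> i" for i
    using partition_antimono[OF \<mu> order_refl that] rect \<open>1 \<le> n\<close> unfolding in_rect_def by auto
  have \<mu>_last: "\<mu> m = 0"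
    using rect \<open>1 \<le> m\<close> unfolding in_rect_def by simp
  have \<mu>_step: "\<mu> i \<le> \<mu> (i - 1)" if "1 \<le> i - 1" for i
    using partition_antimono[OF \<mu>, of "i - 1" i] that by simp
  have corner: "corner_sum ?M i j = (if 1 \<le> i \<and> \<mu> i < j then 1 else 0)"
    if "i \<le> m" "j \<le> n" for i j
    using corner_sum_Mmat[OF \<mu> that] .
  have "is_mat m n ?M"
    unfolding is_mat_def Mmat_def by simp
  moreover have "?M \<in> partial_sums_bounded m n"
    unfolding partial_sums_bounded_iff_corner_sum
    by (auto simp: corner) (metis One_nat_def \<mu>_step le_less_trans not_le)
  moreover have "(\<Sum>j=1..n. ?M i j) = (if i = 1 then 1 else 0)" if "i \<in> {1..m}" for i
    using that row_partial_sum_eq[of i ?M n] \<mu>_lt_n[of i] \<mu>_lt_n[of "i - 1"]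
    by (auto simp: corner)
  moreover have "(\<Sum>i=1..m. ?M i j) = (if j = 1 then 1 else 0)" if "j \<in> {1..n}" for j
    using that \<mu>_last \<open>1 \<le> m\<close> column_partial_sum_Mmat[OF \<mu> order_refl, of j] by auto
  moreover have "?M i j = 0" if "j \<le> \<mu> i \<or> (2 \<le> i \<and> \<mu> (i - 1) + 1 < j) \<or> (i = 1 \<and> \<mu> 1 + 1 < j)" for i j
    using that \<mu>_step[of i] by (auto simp: Mmat_def)
  ultimately show ?thesis
    unfolding pasm_equations_def using \<open>1 \<le> m\<close> \<open>1 \<le> n\<close> by auto
qed

definition zero_profile :: "nat \<Rightarrow> nat \<Rightarrow> rmat \<Rightarrow> nat \<Rightarrow> nat" where
  "zero_profile m n X i = (if 1 \<le> i \<and> i \<le> m then card {j\<in>{1..n}. corner_sum X i j = 0} else 0)"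

definition fractional_corner_sums :: "nat \<Rightarrow> nat \<Rightarrow> rmat \<Rightarrow> real set" where
  "fractional_corner_sums m n X = {corner_sum X i j | i j.
     i \<in> {1..m} \<and> j \<in> {1..n} \<and> 0 < corner_sum X i j \<and> corner_sum X i j < 1}"

lemma finite_fractional_corner_sums: "finite (fractional_corner_sums m n X)"
proof -
  have "fractional_corner_sums m n X \<subseteq> (\<lambda>(i, j). corner_sum X i j) ` ({1..m} \<times> {1..n})"
    unfolding fractional_corner_sums_def by auto
  then show ?thesis
    by (rule finite_subset) simp
qed

text \<open>The map induced on a corner sum \<open>v\<close> by subtracting \<open>t\<close> times the vertex whose corner sums
  are \<open>[v > 0]\<close> and rescaling by \<open>1 / (1 - t)\<close>.\<close>
definition peel :: "real \<Rightarrow> real \<Rightarrow> real" where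
  "peel t v = (v - (if 0 < v then t else 0)) / (1 - t)"

lemma peel_mono_bounded:
  fixes t a b :: real
  assumes "0 < t" "t < 1" and "a = 0 \<or> t \<le> a \<and> a \<le> 1" and "b = 0 \<or> t \<le> b \<and> b \<le> 1"
    and "a \<le> b"
  shows "peel t a \<le> peel t b \<and> peel t b \<le> peel t a + 1"
proof -
  have "0 < 1 - t"
    using assms(2) by simp
  show ?thesis
  proof (cases "a = 0")
    case True
    then show ?thesis
      using assms(1,4) \<open>0 < 1 - t\<close> by (cases "b = 0") (auto simp: peel_def divide_simps)
  next
    case False
    then have "t \<le> a" "0 < a" "0 < b" "b \<le> 1"
      using assms by auto
    then show ?thesis
      using assms(5) \<open>0 < 1 - t\<close> by (simp add: peel_def divide_simps)
  qed
qed

definition peel_mat :: "nat \<Rightarrow> nat \<Rightarrow> real \<Rightarrow> rmat \<Rightarrow> rmat" where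
  "peel_mat m n t X = (1 / (1 - t)) *\<^sub>R X + (- t / (1 - t)) *\<^sub>R Mmat (zero_profile m n X) m n"

locale skew_shape =
  fixes m n :: nat and lam \<nu> :: "nat \<Rightarrow> nat"
  assumes m_pos: "1 \<le> m" and n_pos: "1 \<le> n"
    and lam_partition: "is_partition lam" and \<nu>_partition: "is_partition \<nu>"
    and lam_le_\<nu>: "part_le lam \<nu>"
    and \<nu>_in_rect: "in_rect \<nu> (n - 1) (m - 1)"
begin

abbreviation region :: "rmat set" where
  "region \<equiv> pasm_equations m n lam \<nu> \<inter> partial_sums_bounded m n"

abbreviation vertices :: "rmat set" where
  "vertices \<equiv> {Mmat \<mu> m n | \<mu>. is_partition \<mu> \<and> part_le lam \<mu> \<and> part_le \<mu> \<nu>}"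

lemma convex_region: "convex region"
  using affine_imp_convex[OF affine_pasm_equations] convex_partial_sums_bounded by (rule convex_Int)

lemma vertices_subset_region: "vertices \<subseteq> region"
proof
  fix M assume "M \<in> vertices"
  then obtain \<mu> where \<mu>: "is_partition \<mu>" "part_le lam \<mu>" "part_le \<mu> \<nu>" and "M = Mmat \<mu> m n"
    by blast
  have "in_rect \<mu> (n - 1) (m - 1)"
    using \<mu>(3) \<nu>_in_rect by (rule in_rect_mono)
  then show "M \<in> region"
    using Mmat_mem_own_constraints[OF \<mu>(1) _ m_pos n_pos] pasm_equations_mono[OF \<mu>(2,3)]
      \<open>M = Mmat \<mu> m n\<close>
    by blast
qed

context
  fixes X :: rmat
  assumes X: "X \<in> region"
begin

lemma corner_sum_steps:
  assumes "i \<in> {1..m}" "j \<in> {1..n}"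
  shows "corner_sum X i (j - 1) \<le> corner_sum X i j \<and> corner_sum X i j \<le> corner_sum X i (j - 1) + 1 \<and>
    corner_sum X (i - 1) j \<le> corner_sum X i j \<and> corner_sum X i j \<le> corner_sum X (i - 1) j + 1"
  using X[THEN IntD2] assms unfolding partial_sums_bounded_iff_corner_sum by blast

lemma corner_sum_mono_col:
  assumes "i \<le> m" "j \<le> j'" "j' \<le> n"
  shows "corner_sum X i j \<le> corner_sum X i j'"
proof (rule lift_Suc_mono_le_ivl[where N = "{..<n}"])
  show "corner_sum X i k \<le> corner_sum X i (Suc k)" if "k \<in> {..<n}" for k
    using corner_sum_steps[of i "Suc k"] assms(1) that by (cases "i = 0") auto
qed (use assms in auto)

lemma corner_sum_mono_row:
  assumes "i \<le> i'" "i' \<le> m" "j \<le> n"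
  shows "corner_sum X i j \<le> corner_sum X i' j"
proof (rule lift_Suc_mono_le_ivl[where N = "{..<m}" and f = "\<lambda>i. corner_sum X i j"])
  show "corner_sum X k j \<le> corner_sum X (Suc k) j" if "k \<in> {..<m}" for k
    using corner_sum_steps[of "Suc k" j] assms(3) that by (cases "j = 0") auto
qed (use assms in auto)

lemma corner_sum_last_col:
  assumes "1 \<le> i" "i \<le> m"
  shows "corner_sum X i n = 1"
proof -
  have "corner_sum X i n = (\<Sum>i'=1..i. \<Sum>j=1..n. X i' j)"
    unfolding corner_sum_def ..
  also have "\<dots> = (\<Sum>i'\<in>{1..i}. if i' = 1 then 1 else 0)"
    using X assms unfolding pasm_equations_def by (intro sum.cong) auto
  also have "\<dots> = 1"
    using assms by simp
  finally show ?thesis .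
qed

lemma corner_sum_nonneg: "i \<le> m \<Longrightarrow> j \<le> n \<Longrightarrow> 0 \<le> corner_sum X i j"
  using corner_sum_mono_row[of 0 i j] by simp

lemma corner_sum_le_1: "i \<le> m \<Longrightarrow> j \<le> n \<Longrightarrow> corner_sum X i j \<le> 1"
  using corner_sum_mono_col[of i j n] corner_sum_last_col[of i] by (cases "i = 0") auto

lemma corner_sum_below_lam:
  assumes "1 \<le> i" "i \<le> m" "j \<le> lam i"
  shows "corner_sum X i j = 0"
proof -
  have "X i' j' = 0" if "i' \<in> {1..i}" "j' \<in> {1..j}" for i' j'
  proof (cases "j' \<le> n")
    case True
    have "lam i \<le> lam i'"
      using partition_antimono[OF lam_partition, of i' i] that by simp
    then show ?thesis
      using X True that assms unfolding pasm_equations_def by auto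
  next
    case False
    then show ?thesis
      using X unfolding pasm_equations_def is_mat_def by simp
  qed
  then show ?thesis
    unfolding corner_sum_def by simp
qed

lemma column_partial_sum_beyond_\<nu>:
  assumes "1 \<le> i" "i \<le> m" "\<nu> i + 1 < j" "j \<le> n"
  shows "(\<Sum>i'=1..i. X i' j) = 0"
proof -
  have "X i' j = 0" if "i' \<in> {i + 1..m}" for i'
  proof -
    have "\<nu> (i' - 1) \<le> \<nu> i"
      using partition_antimono[OF \<nu>_partition assms(1), of "i' - 1"] that by auto
    then show ?thesis
      using X assms that unfolding pasm_equations_def by auto
  qed
  then have "(\<Sum>i'=i + 1..m. X i' j) = 0"
    by simp
  moreover have "(\<Sum>i'=1..m. X i' j) = 0"
    using X assms unfolding pasm_equations_def by auto
  moreover have "(\<Sum>i'=1..m. X i' j) = (\<Sum>i'=1..i. X i' j) + (\<Sum>i'=i + 1..m. X i' j)"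
    using sum.ub_add_nat[of 1 i "\<lambda>i'. X i' j" "m - i"] assms(1,2) by simp
  ultimately show ?thesis
    by simp
qed

lemma corner_sum_beyond_\<nu>:
  assumes "1 \<le> i" "i \<le> m" "\<nu> i < j" "j \<le> n"
  shows "corner_sum X i j = 1"
  using assms(4)
proof (induction j rule: inc_induct)
  case base
  then show ?case
    using corner_sum_last_col assms(1,2) by simp
next
  case (step k)
  then show ?case
    using corner_sum_Suc_col[of X i k] column_partial_sum_beyond_\<nu>[OF assms(1,2), of "Suc k"] assms(3)
    by simp
qed

lemma corner_sum_eq_0_iff:
  assumes "1 \<le> i" "i \<le> m" "j \<le> n"
  shows "corner_sum X i j = 0 \<longleftrightarrow> j \<le> zero_profile m n X i"
proof (cases "j = 0")
  case False
  let ?S = "{j\<in>{1..n}. corner_sum X i j = 0}"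
  have "?S = {1..card ?S}"
  proof (rule downward_closed_eq_atLeastAtMost)
    fix j j' assume "j' \<in> ?S" "1 \<le> j" "j \<le> j'"
    then show "j \<in> ?S"
      using corner_sum_nonneg[of i j] corner_sum_mono_col[of i j j'] assms(2) by auto
  qed auto
  then have "j \<in> ?S \<longleftrightarrow> j \<in> {1..card ?S}"
    by simp
  then show ?thesis
    using False assms unfolding zero_profile_def by auto
qed simp

lemma zero_profile_less: "zero_profile m n X i < n"
proof (cases "1 \<le> i \<and> i \<le> m")
  case True
  then have "\<not> n \<le> zero_profile m n X i"
    using corner_sum_eq_0_iff[of i n] corner_sum_last_col[of i] by simp
  then show ?thesis
    by simp
next
  case False
  then show ?thesis
    using n_pos unfolding zero_profile_def by auto
qed

lemma zero_profile_partition: "is_partition (zero_profile m n X)"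
  unfolding is_partition_def
proof (intro conjI allI impI)
  fix i :: nat assume "1 \<le> i"
  show "zero_profile m n X (Suc i) \<le> zero_profile m n X i"
  proof (cases "Suc i \<le> m")
    case True
    define k where "k = zero_profile m n X (Suc i)"
    have "k \<le> n"
      using zero_profile_less[of "Suc i"] k_def by simp
    then have "corner_sum X (Suc i) k = 0"
      using corner_sum_eq_0_iff[of "Suc i" k] True k_def by simp
    then have "corner_sum X i k = 0"
      using corner_sum_mono_row[of i "Suc i" k] corner_sum_nonneg[of i k] True \<open>k \<le> n\<close> by simp
    then show ?thesis
      using corner_sum_eq_0_iff[of i k] \<open>1 \<le> i\<close> True \<open>k \<le> n\<close> k_def by simp
  next
    case False
    then show ?thesis
      unfolding zero_profile_def by simp
  qed
next
  have "{i. 1 \<le> i \<and> 0 < zero_profile m n X i} \<subseteq> {1..m}"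
    unfolding zero_profile_def by auto
  then show "finite {i. 1 \<le> i \<and> 0 < zero_profile m n X i}"
    by (rule finite_subset) simp
qed

lemma lam_le_zero_profile: "part_le lam (zero_profile m n X)"
  unfolding part_le_def
proof (intro allI impI)
  fix i :: nat assume "1 \<le> i"
  show "lam i \<le> zero_profile m n X i"
  proof (cases "i \<le> m")
    case True
    have "lam i \<le> \<nu> 1"
      using lam_le_\<nu> partition_antimono[OF \<nu>_partition order_refl \<open>1 \<le> i\<close>] \<open>1 \<le> i\<close>
      unfolding part_le_def by (metis le_trans)
    then have "lam i \<le> n"
      using \<nu>_in_rect unfolding in_rect_def by auto
    then show ?thesis
      using corner_sum_below_lam[of i "lam i"] corner_sum_eq_0_iff[of i "lam i"] \<open>1 \<le> i\<close> True
      by simp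
  next
    case False
    then have "\<nu> i = 0"
      using \<nu>_in_rect unfolding in_rect_def by simp
    then show ?thesis
      using lam_le_\<nu> \<open>1 \<le> i\<close> unfolding part_le_def by (metis le_zero_eq zero_le)
  qed
qed

lemma zero_profile_le_\<nu>: "part_le (zero_profile m n X) \<nu>"
  unfolding part_le_def
proof (intro allI impI)
  fix i :: nat assume "1 \<le> i"
  show "zero_profile m n X i \<le> \<nu> i"
  proof (cases "i \<le> m \<and> \<nu> i < n")
    case True
    then have "\<not> \<nu> i + 1 \<le> zero_profile m n X i"
      using corner_sum_beyond_\<nu>[of i "\<nu> i + 1"] corner_sum_eq_0_iff[of i "\<nu> i + 1"] \<open>1 \<le> i\<close>
      by simp
    then show ?thesis
      by simp
  next
    case False
    then show ?thesis
      using zero_profile_less[of i] unfolding zero_profile_def by auto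
  qed
qed

lemma Mmat_zero_profile_mem_vertices: "Mmat (zero_profile m n X) m n \<in> vertices"
  using zero_profile_partition lam_le_zero_profile zero_profile_le_\<nu> by blast

lemma corner_sum_Mmat_zero_profile:
  assumes "i \<le> m" "j \<le> n"
  shows "corner_sum (Mmat (zero_profile m n X) m n) i j = (if 0 < corner_sum X i j then 1 else 0)"
  using corner_sum_Mmat[OF zero_profile_partition assms] corner_sum_eq_0_iff[of i j]
    corner_sum_nonneg[OF assms] assms
  by (cases "i = 0") auto

lemma mem_vertices_if_integral:
  assumes "fractional_corner_sums m n X = {}"
  shows "X \<in> vertices"
proof -
  define M where "M = Mmat (zero_profile m n X) m n"
  have "X = M"
    unfolding M_def
  proof (rule mat_eqI_corner_sum)
    show "is_mat m n X"
      using X unfolding pasm_equations_def by simp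
    show "is_mat m n (Mmat (zero_profile m n X) m n)"
      unfolding is_mat_def Mmat_def by simp
    fix i j assume "i \<le> m" "j \<le> n"
    then have "corner_sum X i j = 0 \<or> corner_sum X i j = 1"
      using assms corner_sum_nonneg[of i j] corner_sum_le_1[of i j]
      unfolding fractional_corner_sums_def by (cases "i = 0 \<or> j = 0") force+
    then show "corner_sum X i j = corner_sum (Mmat (zero_profile m n X) m n) i j"
      using corner_sum_Mmat_zero_profile[OF \<open>i \<le> m\<close> \<open>j \<le> n\<close>] by auto
  qed
  moreover have "M \<in> vertices"
    unfolding M_def by (rule Mmat_zero_profile_mem_vertices)
  ultimately show ?thesis
    by simp
qed

lemma corner_sum_gap:
  assumes "fractional_corner_sums m n X \<noteq> {}" "i \<le> m" "j \<le> n"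
  shows "corner_sum X i j = 0 \<or>
    Min (fractional_corner_sums m n X) \<le> corner_sum X i j \<and> corner_sum X i j \<le> 1"
proof (cases "corner_sum X i j = 0 \<or> corner_sum X i j = 1")
  case True
  have "Min (fractional_corner_sums m n X) \<le> 1"
    using Min_in[OF finite_fractional_corner_sums assms(1)]
    unfolding fractional_corner_sums_def by auto
  with True show ?thesis
    by auto
next
  case False
  then have "corner_sum X i j \<in> fractional_corner_sums m n X"
    using assms(2,3) corner_sum_nonneg[of i j] corner_sum_le_1[of i j]
    unfolding fractional_corner_sums_def by (cases "i = 0 \<or> j = 0") force+
  then show ?thesis
    using corner_sum_le_1[OF assms(2,3)] finite_fractional_corner_sums by simp
qed

lemma Min_fractional_corner_sums:
  assumes "fractional_corner_sums m n X \<noteq> {}"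
  shows "0 < Min (fractional_corner_sums m n X)" "Min (fractional_corner_sums m n X) < 1"
  using Min_in[OF finite_fractional_corner_sums assms] unfolding fractional_corner_sums_def by auto

lemma corner_sum_peel_mat:
  assumes "i \<le> m" "j \<le> n"
  shows "corner_sum (peel_mat m n t X) i j = peel t (corner_sum X i j)"
proof -
  have "corner_sum (peel_mat m n t X) i j = 1 / (1 - t) * corner_sum X i j
      + - t / (1 - t) * corner_sum (Mmat (zero_profile m n X) m n) i j"
    unfolding peel_mat_def by (rule corner_sum_lincomb)
  then show ?thesis
    using corner_sum_Mmat_zero_profile[OF assms] by (simp add: peel_def diff_divide_distrib)
qed

lemma peel_mat_decomposition:
  assumes "t < 1"
  shows "X = t *\<^sub>R Mmat (zero_profile m n X) m n + (1 - t) *\<^sub>R peel_mat m n t X"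
  using assms by (simp add: peel_mat_def fun_eq_iff field_simps)

context
  assumes fractional: "fractional_corner_sums m n X \<noteq> {}"
begin

abbreviation t\<^sub>X :: real where
  "t\<^sub>X \<equiv> Min (fractional_corner_sums m n X)"

lemma peel_mat_mem_region: "peel_mat m n t\<^sub>X X \<in> region"
proof
  note t = Min_fractional_corner_sums[OF fractional]
  have "1 / (1 - t\<^sub>X) + - t\<^sub>X / (1 - t\<^sub>X) = 1"
    using t by (simp add: diff_divide_distrib[symmetric])
  moreover have "Mmat (zero_profile m n X) m n \<in> region"
    using Mmat_zero_profile_mem_vertices vertices_subset_region by blast
  ultimately show "peel_mat m n t\<^sub>X X \<in> pasm_equations m n lam \<nu>"
    using X affine_pasm_equations unfolding affine_def peel_mat_def by blast
  show "peel_mat m n t\<^sub>X X \<in> partial_sums_bounded m n"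
    unfolding partial_sums_bounded_iff_corner_sum
  proof (intro ballI)
    fix i j assume ij: "i \<in> {1..m}" "j \<in> {1..n}"
    then have le: "i - 1 \<le> m" "j - 1 \<le> n" "i \<le> m" "j \<le> n"
      by auto
    note gap = corner_sum_gap[OF fractional]
    have "peel t\<^sub>X (corner_sum X i (j - 1)) \<le> peel t\<^sub>X (corner_sum X i j) \<and>
        peel t\<^sub>X (corner_sum X i j) \<le> peel t\<^sub>X (corner_sum X i (j - 1)) + 1"
      using corner_sum_steps[OF ij] by (intro peel_mono_bounded t gap le) simp
    moreover have "peel t\<^sub>X (corner_sum X (i - 1) j) \<le> peel t\<^sub>X (corner_sum X i j) \<and>
        peel t\<^sub>X (corner_sum X i j) \<le> peel t\<^sub>X (corner_sum X (i - 1) j) + 1"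
      using corner_sum_steps[OF ij] by (intro peel_mono_bounded t gap le) simp
    ultimately show "corner_sum (peel_mat m n t\<^sub>X X) i (j - 1) \<le> corner_sum (peel_mat m n t\<^sub>X X) i j \<and>
        corner_sum (peel_mat m n t\<^sub>X X) i j \<le> corner_sum (peel_mat m n t\<^sub>X X) i (j - 1) + 1 \<and>
        corner_sum (peel_mat m n t\<^sub>X X) (i - 1) j \<le> corner_sum (peel_mat m n t\<^sub>X X) i j \<and>
        corner_sum (peel_mat m n t\<^sub>X X) i j \<le> corner_sum (peel_mat m n t\<^sub>X X) (i - 1) j + 1"
      using corner_sum_peel_mat[OF le(3,4)] corner_sum_peel_mat[OF le(3,2)]
        corner_sum_peel_mat[OF le(1,4)]
      by simp
  qed
qed

lemma fractional_corner_sums_peel_mat: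
  "fractional_corner_sums m n (peel_mat m n t\<^sub>X X) \<subseteq> peel t\<^sub>X ` (fractional_corner_sums m n X - {t\<^sub>X})"
proof
  note t = Min_fractional_corner_sums[OF fractional]
  fix v assume "v \<in> fractional_corner_sums m n (peel_mat m n t\<^sub>X X)"
  then obtain i j where ij: "i \<in> {1..m}" "j \<in> {1..n}"
    and v: "v = peel t\<^sub>X (corner_sum X i j)" "0 < v" "v < 1"
    unfolding fractional_corner_sums_def using corner_sum_peel_mat by auto
  then have "corner_sum X i j \<noteq> 0" "corner_sum X i j \<noteq> t\<^sub>X" "corner_sum X i j \<noteq> 1"
    using t by (auto simp: peel_def)
  then have "corner_sum X i j \<in> fractional_corner_sums m n X - {t\<^sub>X}"
    using corner_sum_gap[OF fractional, of i j] ij t unfolding fractional_corner_sums_def by force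
  then show "v \<in> peel t\<^sub>X ` (fractional_corner_sums m n X - {t\<^sub>X})"
    using v by blast
qed

lemma card_fractional_corner_sums_peel_mat:
  "card (fractional_corner_sums m n (peel_mat m n t\<^sub>X X)) < card (fractional_corner_sums m n X)"
proof -
  have "card (fractional_corner_sums m n (peel_mat m n t\<^sub>X X))
      \<le> card (peel t\<^sub>X ` (fractional_corner_sums m n X - {t\<^sub>X}))"
    using fractional_corner_sums_peel_mat by (intro card_mono) (simp_all add: finite_fractional_corner_sums)
  also have "\<dots> \<le> card (fractional_corner_sums m n X - {t\<^sub>X})"
    by (rule card_image_le) (simp add: finite_fractional_corner_sums)
  also have "\<dots> < card (fractional_corner_sums m n X)"
    using Min_in[OF finite_fractional_corner_sums fractional]
    by (rule card_Diff1_less[OF finite_fractional_corner_sums])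
  finally show ?thesis .
qed

end

end

lemma region_subset_hull: "X \<in> region \<Longrightarrow> X \<in> convex hull vertices"
proof (induction "card (fractional_corner_sums m n X)" arbitrary: X rule: less_induct)
  case less
  show ?case
  proof (cases "fractional_corner_sums m n X = {}")
    case True
    then show ?thesis
      using mem_vertices_if_integral[OF less.prems] by (simp add: hull_inc)
  next
    case False
    define t where "t = Min (fractional_corner_sums m n X)"
    note t = Min_fractional_corner_sums[OF less.prems False, folded t_def]
    have "Mmat (zero_profile m n X) m n \<in> convex hull vertices"
      using Mmat_zero_profile_mem_vertices[OF less.prems] by (rule hull_inc)
    moreover have "peel_mat m n t X \<in> convex hull vertices"
      using less.hyps card_fractional_corner_sums_peel_mat[OF less.prems False]
        peel_mat_mem_region[OF less.prems False]
      unfolding t_def by blast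
    ultimately have "t *\<^sub>R Mmat (zero_profile m n X) m n + (1 - t) *\<^sub>R peel_mat m n t X
        \<in> convex hull vertices"
      using t by (intro convexD[OF convex_convex_hull]) auto
    then show ?thesis
      using peel_mat_decomposition[OF less.prems t(2)] by simp
  qed
qed

lemma PASM_eq_region: "PASM \<nu> lam m n = region"
proof
  show "PASM \<nu> lam m n \<subseteq> region"
    unfolding PASM_def using vertices_subset_region convex_region by (rule hull_minimal)
  show "region \<subseteq> PASM \<nu> lam m n"
    unfolding PASM_def using region_subset_hull by blast
qed

end

theorem theorem1:
  fixes m n :: nat and lam \<nu> :: "nat \<Rightarrow> nat"
  assumes "1 \<le> m" and "1 \<le> n"
    and "is_partition lam" and "is_partition \<nu>"
    and "part_le lam \<nu>"
    and "in_rect \<nu> (n - 1) (m - 1)"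
  shows "PASM \<nu> lam m n =
    {X :: rmat. is_mat m n X
      \<and> (\<forall>i\<in>{1..m}. \<forall>j\<in>{1..n}. 0 \<le> (\<Sum>i'=1..i. X i' j) \<and> (\<Sum>i'=1..i. X i' j) \<le> 1)
      \<and> (\<forall>i\<in>{1..m}. \<forall>j\<in>{1..n}. 0 \<le> (\<Sum>j'=1..j. X i j') \<and> (\<Sum>j'=1..j. X i j') \<le> 1)
      \<and> (\<Sum>i=1..m. X i 1) = 1 \<and> (\<Sum>j=1..n. X 1 j) = 1
      \<and> (\<forall>i\<in>{2..m}. (\<Sum>j=1..n. X i j) = 0)
      \<and> (\<forall>j\<in>{2..n}. (\<Sum>i=1..m. X i j) = 0)
      \<and> (\<forall>i\<in>{1..m}. \<forall>j\<in>{1..n}. j \<le> lam i \<longrightarrow> X i j = 0)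
      \<and> (\<forall>i\<in>{2..m}. \<forall>j. \<nu> (i - 1) + 1 < j \<and> j \<le> n \<longrightarrow> X i j = 0)
      \<and> (\<forall>j. \<nu> 1 + 1 < j \<and> j \<le> n \<longrightarrow> X 1 j = 0)}"
proof -
  interpret skew_shape m n lam \<nu>
    using assms by unfold_locales
  show ?thesis
    unfolding PASM_eq_region pasm_equations_def partial_sums_bounded_def by blast
qed

end
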